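(* Let $J$ be a $\times d$-invariant set, $\delta$ its Hausdorff dimension, $\mu=\mathcal{H}^\delta|_J$, and $\lambda$ Lebesgue measure on $\mathbb{R}$. For $x\ne y$ in $\mathbb{R}$ let $f_{x,y}$ be the unique affine map $\mathbb{R}\to\mathbb{R}$ with $f_{x,y}(x)=0$ and $f_{x,y}(y)=1$. Then: (i) for $\lambda\times\lambda$-almost every $(x,y)\in\mathbb{R}^2$, $f_{x,y}(J)\cap\mathbb{Q}=\emptyset$; (ii) for $\mu\times\lambda$-almost every $(x,y)\in\mathbb{R}^2$, $f_{x,y}(J)\cap\mathbb{Q}=\{0\}$.
   Context: Fix an integer $d\ge2$ and $E\subseteq\{0,\dots,d-1\}$ with $1<\#E<d$. The associated $\times d$-invariant set is $J=\{x\in[0,1]: x=\sum_{i\ge1}a_id^{-i}\text{ for some digits }a_i\in E\}$. *)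

theory Defs
  imports "HOL-Analysis.Analysis"
begin

text \<open>The x d-invariant set J generated by the digit set E (digit a i is the (i+1)-th digit).\<close>
definition digit_set :: "nat \<Rightarrow> nat set \<Rightarrow> real set" where
  "digit_set d E = {x \<in> {0..1}. \<exists>a :: nat \<Rightarrow> nat. (\<forall>i. a i \<in> E) \<and>
      x = (\<Sum>i. real (a i) / real d ^ (Suc i))}"

definition hcost :: "real \<Rightarrow> real set \<Rightarrow> ennreal" where
  "hcost s U = (if U = {} then 0 else if s = 0 then 1 else ennreal (diameter U powr s))"

definition hausdorff_pre :: "real \<Rightarrow> real \<Rightarrow> real set \<Rightarrow> ennreal" where
  "hausdorff_pre s r A = (INF U \<in> {U :: nat \<Rightarrow> real set. A \<subseteq> (\<Union>i. U i) \<and>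
        (\<forall>i. bounded (U i) \<and> diameter (U i) \<le> r)}. (\<Sum>i. hcost s (U i)))"

definition hausdorff_measure :: "real \<Rightarrow> real set \<Rightarrow> ennreal" where
  "hausdorff_measure s A = (SUP r \<in> {0<..}. hausdorff_pre s r A)"

definition hausdorff_dim :: "real set \<Rightarrow> real" where
  "hausdorff_dim A = Inf {s. 0 \<le> s \<and> hausdorff_measure s A = 0}"

definition hausdorff_restr :: "real \<Rightarrow> real set \<Rightarrow> real measure" where
  "hausdorff_restr s J = measure_of UNIV (sets borel) (\<lambda>A. hausdorff_measure s (A \<inter> J))"

definition aff :: "real \<Rightarrow> real \<Rightarrow> real \<Rightarrow> real" where
  "aff x y t = (t - x) / (y - x)"

end

theory Submission
  imports Defs
begin

(* The proof rests on one observation: the digit set J is a closed Lebesgue-null set.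
   Closedness holds because J is the continuous image of the compact sequence space E^N
   under the digit expansion map (intersected with [0,1]); nullity because J is covered,
   for every n, by (card E)^n intervals of length d^(-n), and card E < d.

   Given a null set J and a point x, for every nonzero rational r the point
   (1 - r) x + r y lies in J only for a Lebesgue-null set of y (affine invariance of
   Lebesgue measure); as there are countably many r, for almost every y no such point
   lies in J.  This says precisely that aff x y (J) meets the rationals at most in
   aff x y (x) = 0.  A Tonelli-type argument (only the second factor needs to be
   sigma-finite, since the first factor of part (ii) is a restricted Hausdorff measure)
   lifts this to the product measure.  Part (i) then uses that Lebesgue-almost every x
   lies outside J, part (ii) that the restricted Hausdorff measure lives on J. *)

section \<open>The digit set is a closed Lebesgue-null set\<close>

lemma digit_series_bounds:
  fixes b :: "nat \<Rightarrow> real" and d :: nat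
  assumes d: "d \<ge> 2" and b: "\<And>i. 0 \<le> b i \<and> b i \<le> real d - 1"
  shows "summable (\<lambda>i. b i / real d ^ Suc i) \<and> 0 \<le> (\<Sum>i. b i / real d ^ Suc i)
         \<and> (\<Sum>i. b i / real d ^ Suc i) \<le> 1"
proof -
  have dpos: "real d > 1" using d by simp
  have geometric: "(\<lambda>i. ((real d - 1) / real d) * (1 / real d) ^ i) sums
          (((real d - 1) / real d) * (1 / (1 - 1 / real d)))"
    by (intro sums_mult geometric_sums) (use dpos in simp)
  have limit: "((real d - 1) / real d) * (1 / (1 - 1 / real d)) = 1"
    using dpos by (simp add: field_simps)
  have terms: "\<And>i. ((real d - 1) / real d) * (1 / real d) ^ i = (real d - 1) / real d ^ Suc i"
    by (simp add: power_divide field_simps)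
  have max_sum: "(\<lambda>i. (real d - 1) / real d ^ Suc i) sums 1"
    using geometric unfolding limit terms .
  have le: "\<And>i. b i / real d ^ Suc i \<le> (real d - 1) / real d ^ Suc i"
    using b dpos by (intro divide_right_mono) auto
  have nn: "\<And>i. 0 \<le> b i / real d ^ Suc i" using b dpos by auto
  have s: "summable (\<lambda>i. b i / real d ^ Suc i)"
  proof (rule summable_comparison_test'[where N=0])
    show "summable (\<lambda>i. (real d - 1) / real d ^ Suc i)" using max_sum by (simp add: sums_iff)
    show "norm (b n / real d ^ Suc n) \<le> (real d - 1) / real d ^ Suc n" for n
      using nn[of n] le[of n] by simp
  qed
  moreover have "0 \<le> (\<Sum>i. b i / real d ^ Suc i)" using s nn by (simp add: suminf_nonneg)
  moreover have "(\<Sum>i. b i / real d ^ Suc i) \<le> 1"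
    using suminf_le[OF le s] max_sum by (simp add: sums_iff)
  ultimately show ?thesis by blast
qed

lemma digit_set_eq_image:
  "digit_set d E = {0..1} \<inter> (\<lambda>b. \<Sum>i. b i / real d ^ Suc i) ` (PiE UNIV (\<lambda>_. real ` E))"
proof (intro equalityI subsetI)
  fix x assume "x \<in> digit_set d E"
  then obtain a where a: "\<forall>i. a i \<in> E" "x = (\<Sum>i. real (a i) / real d ^ (Suc i))" "x \<in> {0..1}"
    unfolding digit_set_def by blast
  moreover have "(\<lambda>i. real (a i)) \<in> PiE UNIV (\<lambda>_. real ` E)" using a(1) by auto
  ultimately show "x \<in> {0..1} \<inter> (\<lambda>b. \<Sum>i. b i / real d ^ Suc i) ` (PiE UNIV (\<lambda>_. real ` E))"
    by (intro IntI image_eqI[where x="\<lambda>i. real (a i)"]) auto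
next
  fix x assume "x \<in> {0..1} \<inter> (\<lambda>b. \<Sum>i. b i / real d ^ Suc i) ` (PiE UNIV (\<lambda>_. real ` E))"
  then obtain b where b: "b \<in> PiE UNIV (\<lambda>_. real ` E)" "x = (\<Sum>i. b i / real d ^ Suc i)" "x \<in> {0..1}"
    by blast
  have digits: "nat \<lfloor>b i\<rfloor> \<in> E \<and> real (nat \<lfloor>b i\<rfloor>) = b i" for i
  proof -
    obtain e where "e \<in> E" "b i = real e" using b(1) by (auto simp: PiE_iff)
    then show ?thesis by simp
  qed
  then show "x \<in> digit_set d E"
    unfolding digit_set_def using b digits by (auto intro!: exI[where x="\<lambda>i. nat \<lfloor>b i\<rfloor>"])
qed

text \<open>The expansion map is a uniform limit of continuous partial sums on the compact
  space E^N, so its image, and hence the digit set, is compact and in particular closed.\<close>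
lemma closed_digit_set:
  assumes d: "d \<ge> 2" and E: "E \<subseteq> {0..<d}"
  shows "closed (digit_set d E)"
proof -
  let ?P = "PiE UNIV (\<lambda>_. real ` E) :: (nat \<Rightarrow> real) set"
  let ?f = "\<lambda>b. \<Sum>i. b i / real d ^ Suc i"
  have "compactin (product_topology (\<lambda>_. euclidean) UNIV) ?P"
    using finite_subset[OF E] by (subst compactin_PiE) (auto intro: finite_imp_compact)
  hence compact_P: "compact ?P" by (simp add: euclidean_product_topology)
  have digit_bound: "0 \<le> b i \<and> b i \<le> real d - 1" if b: "b \<in> ?P" for b i
  proof -
    obtain e where "e \<in> E" "b i = real e" using b by (auto simp: PiE_iff)
    with E d show ?thesis by (auto simp: of_nat_diff)
  qed
  have "uniform_limit ?P (\<lambda>n b. \<Sum>i<n. b i / real d ^ Suc i) ?f sequentially"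
  proof (rule Weierstrass_m_test)
    show "norm (b n / real d ^ Suc n) \<le> (real d - 1) / real d ^ Suc n" if "b \<in> ?P" for n b
      using digit_bound[OF that, of n] d by (auto intro!: divide_right_mono)
    show "summable (\<lambda>n. (real d - 1) / real d ^ Suc n)"
      using digit_series_bounds[OF d, of "\<lambda>_. real d - 1"] d by simp
  qed
  moreover have "\<forall>\<^sub>F n in sequentially. continuous_on ?P (\<lambda>b. \<Sum>i<n. b i / real d ^ Suc i)"
    by (intro always_eventually allI continuous_intros
          continuous_on_subset[OF continuous_on_product_coordinates]) (use d in auto)
  ultimately have "continuous_on ?P ?f"
    by (intro uniform_limit_theorem) auto
  hence "closed (?f ` ?P)"
    using compact_P by (intro compact_imp_closed compact_continuous_image)
  thus ?thesis unfolding digit_set_eq_image by (intro closed_Int) auto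
qed

lemma digit_set_cylinder_cover:
  assumes d: "d \<ge> 2" and E: "E \<subseteq> {0..<d}" and x: "x \<in> digit_set d E"
  shows "\<exists>w \<in> PiE {..<n} (\<lambda>_. E). x \<in> {(\<Sum>i<n. real (w i) / real d ^ Suc i) ..
            (\<Sum>i<n. real (w i) / real d ^ Suc i) + 1 / real d ^ n}"
proof -
  obtain a where a: "\<forall>i. a i \<in> E" "x = (\<Sum>i. real (a i) / real d ^ (Suc i))"
    using x unfolding digit_set_def by blast
  have digit_bound: "0 \<le> real (a i) \<and> real (a i) \<le> real d - 1" for i
  proof -
    have "a i < d" using a(1) E by auto
    thus ?thesis by linarith
  qed
  have tail_bounds: "summable (\<lambda>i. real (a (i + n)) / real d ^ Suc i)
      \<and> 0 \<le> (\<Sum>i. real (a (i + n)) / real d ^ Suc i) \<and> (\<Sum>i. real (a (i + n)) / real d ^ Suc i) \<le> 1"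
    by (rule digit_series_bounds[OF d]) (rule digit_bound)
  have "summable (\<lambda>i. real (a i) / real d ^ Suc i)"
    using digit_series_bounds[OF d, of "\<lambda>i. real (a i)"] digit_bound by blast
  from suminf_split_initial_segment[OF this, of n]
  have split: "x = (\<Sum>i. real (a (i + n)) / real d ^ Suc (i + n)) + (\<Sum>i<n. real (a i) / real d ^ Suc i)"
    using a(2) by simp
  have rescale: "(\<lambda>i. real (a (i + n)) / real d ^ Suc (i + n)) = (\<lambda>i. (real (a (i + n)) / real d ^ Suc i) / real d ^ n)"
    by (simp add: power_add field_simps)
  have tail: "(\<Sum>i. real (a (i + n)) / real d ^ Suc (i + n)) = (\<Sum>i. real (a (i + n)) / real d ^ Suc i) / real d ^ n"
    unfolding rescale using tail_bounds by (intro suminf_divide) blast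
  have "0 \<le> (\<Sum>i. real (a (i + n)) / real d ^ Suc (i + n))"
    and "(\<Sum>i. real (a (i + n)) / real d ^ Suc (i + n)) \<le> 1 / real d ^ n"
    unfolding tail using tail_bounds d by (auto intro!: divide_right_mono)
  moreover have "(\<Sum>i<n. real (restrict a {..<n} i) / real d ^ Suc i) = (\<Sum>i<n. real (a i) / real d ^ Suc i)"
    by (intro sum.cong) auto
  ultimately show ?thesis using split a(1)
    by (intro bexI[where x="restrict a {..<n}"]) auto
qed

text \<open>Since card E < d, the total length (card E / d)^n of the cylinder cover tends to 0.\<close>
lemma null_digit_set:
  assumes d: "d \<ge> 2" and E: "E \<subseteq> {0..<d}" and small: "card E < d"
  shows "digit_set d E \<in> null_sets lborel"
proof -
  let ?J = "digit_set d E"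
  have dpos: "real d > 0" using d by simp
  have bound: "emeasure lborel ?J \<le> ennreal ((real (card E) / real d) ^ n)" for n
  proof -
    let ?W = "PiE {..<n} (\<lambda>_. E)"
    let ?I = "\<lambda>w. {(\<Sum>i<n. real (w i) / real d ^ Suc i) ..
                     (\<Sum>i<n. real (w i) / real d ^ Suc i) + 1 / real d ^ n}"
    have finW: "finite ?W" using finite_subset[OF E] by (simp add: finite_PiE)
    have "emeasure lborel ?J \<le> emeasure lborel (\<Union>w\<in>?W. ?I w)"
      using digit_set_cylinder_cover[OF d E]
      by (intro emeasure_mono sets.finite_UN finW) auto
    also have "\<dots> \<le> (\<Sum>w\<in>?W. emeasure lborel (?I w))"
      by (intro emeasure_subadditive_finite finW) (simp add: image_subset_iff)
    also have "\<dots> = (\<Sum>w\<in>?W. ennreal (1 / real d ^ n))"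
      using dpos by (intro sum.cong refl) (simp del: emeasure_lborel_Icc_eq add: emeasure_lborel_Icc)
    also have "\<dots> = ennreal (real (card ?W)) * ennreal (1 / real d ^ n)"
      by (simp only: sum_constant ennreal_of_nat_eq_real_of_nat)
    also have "\<dots> = ennreal (real (card ?W) * (1 / real d ^ n))"
      by (rule ennreal_mult[symmetric]) auto
    also have "\<dots> = ennreal ((real (card E) / real d) ^ n)"
      by (simp add: card_PiE power_divide)
    finally show ?thesis .
  qed
  have "(\<lambda>n. ennreal ((real (card E) / real d) ^ n)) \<longlonglongrightarrow> ennreal 0"
    using small dpos by (intro tendsto_ennrealI LIMSEQ_power_zero) (auto simp: divide_simps)
  hence "emeasure lborel ?J \<le> 0"
    using bound by (intro LIMSEQ_le_const) auto
  moreover have "?J \<in> sets lborel" using closed_digit_set[OF d E] by simp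
  ultimately show ?thesis by (simp add: null_sets_def)
qed

text \<open>Unlike the library version only the second factor
  needs to be sigma-finite, which matters because the first factor in part (ii) is a
  restricted Hausdorff measure.\<close>
lemma AE_pair_measure_right_sigma_finite:
  assumes sf: "sigma_finite_measure M2"
    and meas: "{z \<in> space (M1 \<Otimes>\<^sub>M M2). P z} \<in> sets (M1 \<Otimes>\<^sub>M M2)"
    and ae: "AE x in M1. AE y in M2. P (x, y)"
  shows "AE z in M1 \<Otimes>\<^sub>M M2. P z"
proof -
  let ?N = "{z \<in> space (M1 \<Otimes>\<^sub>M M2). \<not> P z}"
  have N: "?N \<in> sets (M1 \<Otimes>\<^sub>M M2)" using meas by (rule sets.sets_Collect)
  have fibres_null: "AE x in M1. (\<integral>\<^sup>+ y. indicator ?N (x, y) \<partial>M2) = (\<integral>\<^sup>+ y. 0 \<partial>M2)"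
    using ae
  proof eventually_elim
    case (elim x)
    hence "AE y in M2. indicator ?N (x, y) = (0 :: ennreal)"
      by eventually_elim (simp split: split_indicator)
    thus ?case by (rule nn_integral_cong_AE)
  qed
  have "emeasure (M1 \<Otimes>\<^sub>M M2) ?N = (\<integral>\<^sup>+ x. \<integral>\<^sup>+ y. indicator ?N (x, y) \<partial>M2 \<partial>M1)"
    using N by (rule sigma_finite_measure.emeasure_pair_measure[OF sf])
  also have "\<dots> = 0"
    using nn_integral_cong_AE[OF fibres_null] by simp
  finally show ?thesis using N by (subst AE_iff_measurable[OF _ refl])
qed

lemma hausdorff_measure_empty: "hausdorff_measure s {} = 0"
proof -
  have "hausdorff_pre s r {} = 0" if "r > 0" for r
  proof -
    have "hausdorff_pre s r {} \<le> (\<Sum>i. hcost s {})"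
      unfolding hausdorff_pre_def using that by (intro INF_lower) auto
    thus ?thesis by (simp add: hcost_def)
  qed
  thus ?thesis unfolding hausdorff_measure_def by simp
qed

lemma sets_hausdorff_restr: "sets (hausdorff_restr s J) = sets borel"
  unfolding hausdorff_restr_def using sets.sigma_sets_eq[of borel]
  by (simp add: sets_measure_of_conv)

text \<open>The complement of J is a null set, whether or not the set function defining the
  restricted measure happens to be countably additive.\<close>
lemma AE_hausdorff_restr:
  assumes "J \<in> sets borel"
  shows "AE x in hausdorff_restr s J. x \<in> J"
proof (rule AE_I')
  show "- J \<in> null_sets (hausdorff_restr s J)"
    using assms unfolding null_sets_def sets_hausdorff_restr
    by (simp add: hausdorff_restr_def emeasure_measure_of_conv hausdorff_measure_empty)
qed auto

section \<open>Lines through a point meet a null set only at irrational parameters\<close>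

definition avoids_rational_points :: "real set \<Rightarrow> real \<Rightarrow> real \<Rightarrow> bool" where
  "avoids_rational_points J x y \<longleftrightarrow>
     (\<forall>r::rat. r \<noteq> 0 \<longrightarrow> (1 - real_of_rat r) * x + real_of_rat r * y \<notin> J)"

lemma measurable_avoids_rational_points [measurable]:
  assumes [measurable]: "J \<in> sets borel"
  shows "Measurable.pred (borel \<Otimes>\<^sub>M borel) (\<lambda>p. avoids_rational_points J (fst p) (snd p))"
  unfolding avoids_rational_points_def by measurable

text \<open>Since aff x y maps (1 - r) x + r y to r, avoiding the rational points means that
  the only possible rational value of aff x y on J is aff x y x = 0.\<close>
lemma aff_image_rationals:
  assumes avoid: "avoids_rational_points J x y" and xy: "x \<noteq> y"
  shows "aff x y ` J \<inter> \<rat> = (if x \<in> J then {0} else {})"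
proof -
  have "q = 0" if "q \<in> aff x y ` J \<inter> \<rat>" for q
  proof (rule ccontr)
    assume "q \<noteq> 0"
    obtain t r where t: "t \<in> J" "q = (t - x) / (y - x)" "q = real_of_rat r"
      using \<open>q \<in> aff x y ` J \<inter> \<rat>\<close> unfolding aff_def by (auto elim: Rats_cases)
    have "t = (1 - real_of_rat r) * x + real_of_rat r * y"
      using t xy by (simp add: field_simps)
    moreover have "r \<noteq> 0" using t(3) \<open>q \<noteq> 0\<close> by auto
    ultimately show False using avoid t(1) unfolding avoids_rational_points_def by auto
  qed
  moreover have "0 \<in> aff x y ` J \<longleftrightarrow> x \<in> J"
    using xy by (auto simp: aff_def)
  ultimately show ?thesis by (auto simp: Rats_0) (metis IntI image_eqI)
qed

text \<open>For a Lebesgue-null Borel set J and any x, almost every y avoids J at all nonzero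
  rational parameters: each single parameter is an affine change of variables in y.\<close>
lemma AE_avoids_rational_points:
  assumes null: "J \<in> null_sets lborel"
  shows "AE y in lborel. avoids_rational_points J x y"
proof -
  have [measurable]: "J \<in> sets borel" using null by auto
  have "AE y in lborel. (1 - real_of_rat r) * x + real_of_rat r * y \<notin> J" if "r \<noteq> 0" for r
    using that by (intro AE_borel_affine AE_not_in[OF null]) auto
  thus ?thesis unfolding avoids_rational_points_def by (simp add: AE_all_countable)
qed

lemma AE_product_avoids_rational_points:
  assumes sets_M: "sets M = sets borel" and null: "J \<in> null_sets lborel"
    and [measurable]: "S \<in> sets borel" and on_S: "AE x in M. x \<in> S"
  shows "AE p in M \<Otimes>\<^sub>M lborel. fst p \<in> S \<and> avoids_rational_points J (fst p) (snd p)"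
proof (rule AE_pair_measure_right_sigma_finite)
  show "sigma_finite_measure lborel" by (rule lborel.sigma_finite_measure_axioms)
  have [measurable]: "J \<in> sets borel" using null by auto
  have sets_eq: "sets (M \<Otimes>\<^sub>M lborel) = sets (borel \<Otimes>\<^sub>M borel)"
    using sets_M by (intro sets_pair_measure_cong) simp_all
  have space_eq: "space (M \<Otimes>\<^sub>M lborel) = space (borel \<Otimes>\<^sub>M borel)"
    by (rule sets_eq_imp_space_eq[OF sets_eq])
  have "{p \<in> space (borel \<Otimes>\<^sub>M borel). fst p \<in> S \<and> avoids_rational_points J (fst p) (snd p)}
      \<in> sets (borel \<Otimes>\<^sub>M borel)"
    by measurable
  thus "{p \<in> space (M \<Otimes>\<^sub>M lborel). fst p \<in> S \<and> avoids_rational_points J (fst p) (snd p)}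
      \<in> sets (M \<Otimes>\<^sub>M lborel)"
    unfolding sets_eq space_eq .
  show "AE x in M. AE y in lborel. fst (x, y) \<in> S \<and> avoids_rational_points J (fst (x, y)) (snd (x, y))"
    using on_S by eventually_elim (use AE_avoids_rational_points[OF null] in simp)
qed

theorem mainTheorem3:
  fixes d :: nat and E :: "nat set"
  assumes "d \<ge> 2" and "E \<subseteq> {0..<d}" and "1 < card E" and "card E < d"
  defines "J \<equiv> digit_set d E"
  defines "\<mu> \<equiv> hausdorff_restr (hausdorff_dim J) J"
  shows "(AE p in lborel \<Otimes>\<^sub>M lborel. fst p \<noteq> snd p \<longrightarrow>
            aff (fst p) (snd p) ` J \<inter> \<rat> = {}) \<and>
         (AE p in \<mu> \<Otimes>\<^sub>M lborel. fst p \<noteq> snd p \<longrightarrow>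
            aff (fst p) (snd p) ` J \<inter> \<rat> = {0})"
proof
  have null: "J \<in> null_sets lborel" unfolding J_def using null_digit_set assms by blast
  hence J_borel: "J \<in> sets borel" by auto
  have "AE p in lborel \<Otimes>\<^sub>M lborel. fst p \<in> - J \<and> avoids_rational_points J (fst p) (snd p)"
    using null J_borel AE_not_in[OF null]
    by (intro AE_product_avoids_rational_points) auto
  thus "AE p in lborel \<Otimes>\<^sub>M lborel. fst p \<noteq> snd p \<longrightarrow> aff (fst p) (snd p) ` J \<inter> \<rat> = {}"
    by eventually_elim (auto simp: aff_image_rationals)
  have "AE p in \<mu> \<Otimes>\<^sub>M lborel. fst p \<in> J \<and> avoids_rational_points J (fst p) (snd p)"
    using null J_borel AE_hausdorff_restr[OF J_borel] unfolding \<mu>_def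
    by (intro AE_product_avoids_rational_points sets_hausdorff_restr) auto
  thus "AE p in \<mu> \<Otimes>\<^sub>M lborel. fst p \<noteq> snd p \<longrightarrow> aff (fst p) (snd p) ` J \<inter> \<rat> = {0}"
    by eventually_elim (auto simp: aff_image_rationals)
qed

end
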